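(* For every $\alpha\in[m,M]$ (where $m=\inf_{n\ge1}b_n$, $M=\sup_{n\ge1}b_n$), the limit \[ L(\alpha)=\lim_{x\to+\infty}\frac{1}{\ln x}\sum_{\substack{1\le n\le x\\ b_n\le\alpha}}\frac1n \] exists and equals \[ L(\alpha)=\frac{1}{\ln s}\int_{E_\alpha}\frac{dx}{x},\qquad E_\alpha=\{x\in[s^{-1},1):\ \lambda(x)\le\alpha\}, \] the integral being a Lebesgue integral.
   Context: Fix integers $p\ge 3$ and $2\le s<p$, and a set $A\subset\{0,1,\dots,p-1\}$ with $\#A=s$. Let $h:\{0,1,\dots,s-1\}\to A$ be the unique strictly increasing bijection. For a positive integer $n$ with base-$s$ expansion $n=\sum_{i=0}^k\varepsilon_i s^i$ ($\varepsilon_i\in\{0,\dots,s-1\}$, $\varepsilon_k\ne 0$), put $a_n=\sum_{i=0}^k h(\varepsilon_i)p^i$, and put $a_0=h(0)$. Let $b_n=a_n/n^{\log_s p}$ for $n\ge1$. For real $x\ge0$ let $a(x)=a_{\lfloor x\rfloor}$, and for $x>0$ let $\lambda(x)=\lim_{k\to\infty}\frac{a(s^kx)}{(s^kx)^{\log_s p}}$ (this limit exists for every $x>0$). *)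

theory Defs
  imports "HOL-Analysis.Analysis"
begin

definition hmap :: "nat set \<Rightarrow> nat \<Rightarrow> nat" where
  "hmap A i = sorted_list_of_set A ! i"

text \<open>a_n: replace each base-s digit eps_i of n by h(eps_i) and read in base p.
  The digits of n \<ge> 1 are eps_i = (n div s^i) mod s for the indices i with s^i \<le> n.\<close>
definition aseq :: "nat \<Rightarrow> nat \<Rightarrow> nat set \<Rightarrow> nat \<Rightarrow> nat" where
  "aseq p s A n = (if n = 0 then hmap A 0
     else (\<Sum>i\<in>{i. s ^ i \<le> n}. hmap A ((n div s ^ i) mod s) * p ^ i))"

definition bseq :: "nat \<Rightarrow> nat \<Rightarrow> nat set \<Rightarrow> nat \<Rightarrow> real" where
  "bseq p s A n = real (aseq p s A n) / real n powr log (real s) (real p)"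

definition afun :: "nat \<Rightarrow> nat \<Rightarrow> nat set \<Rightarrow> real \<Rightarrow> nat" where
  "afun p s A x = aseq p s A (nat \<lfloor>x\<rfloor>)"

definition lam :: "nat \<Rightarrow> nat \<Rightarrow> nat set \<Rightarrow> real \<Rightarrow> real" where
  "lam p s A x = lim (\<lambda>k. real (afun p s A (real s ^ k * x)) /
                          (real s ^ k * x) powr log (real s) (real p))"

end

theory Submission
  imports Defs
begin

(* Digit substitution satisfies a(s n + e) = p a(n) + h(e).  Hence for y in [1/s, 1) the ratios
   a(floor(s^k y)) / p^k increase to a limit Lam(y), with lambda(y) = Lam(y) / y^d where
   d = log_s p > 1, and Lam varies by at most p^-j among the y sharing their first j base-s digits.
   As y^d grows at rate at least s/p on [1/s, 1), a level set {lambda = alpha} meets each of the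
   s^j cells of the j-th s-adic partition in a set of diameter O(p^-j), so it is null.
   The block sum of 1/n over s^(K-1) <= n < s^K with b_n <= alpha is the integral over [1/s, 1) of
   the step function s^K [b_m <= alpha] / m, m = floor(s^K x), which tends to [lambda(x) <= alpha] / x
   off that null set because b_m -> lambda(x).  Dominated convergence, a Cesaro average over K and
   squeezing x between s^K and s^(K+1) give the logarithmic density. *)

lemma LIMSEQ_Cesaro_diff:
  fixes X :: "nat \<Rightarrow> real"
  assumes "(\<lambda>n. X (Suc n) - X n) \<longlonglongrightarrow> L"
  shows "(\<lambda>n. X n / real n) \<longlonglongrightarrow> L"
proof (rule LIMSEQ_I)
  fix e :: real assume e: "0 < e"
  from LIMSEQ_D[OF assms, of "e / 2"] e
  obtain N where N: "\<And>n. n \<ge> N \<Longrightarrow> \<bar>X (Suc n) - X n - L\<bar> < e / 2"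
    by auto
  define C where "C = \<bar>X N - real N * L\<bar>"
  obtain M :: nat where M: "M > 2 * C / e"
    using reals_Archimedean2 by blast
  show "\<exists>n0. \<forall>n\<ge>n0. norm (X n / real n - L) < e"
  proof (intro exI[of _ "max (Suc N) M"] allI impI)
    fix n assume n: "max (Suc N) M \<le> n"
    then have "N \<le> n" and n_pos: "real n > 0" by auto
    have "(\<Sum>i = N..<n. X (Suc i) - X i - L) = (X n - X N) - real (n - N) * L"
      using sum_Suc_diff'[OF \<open>N \<le> n\<close>, of X] by (simp add: sum_subtractf)
    then have "X n - real n * L = (X N - real N * L) + (\<Sum>i = N..<n. X (Suc i) - X i - L)"
      using \<open>N \<le> n\<close> by (simp add: of_nat_diff algebra_simps)
    then have "\<bar>X n - real n * L\<bar> \<le> C + \<bar>\<Sum>i = N..<n. X (Suc i) - X i - L\<bar>"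
      unfolding C_def by linarith
    also have "\<bar>\<Sum>i = N..<n. X (Suc i) - X i - L\<bar> \<le> (\<Sum>i = N..<n. \<bar>X (Suc i) - X i - L\<bar>)"
      by (rule sum_abs)
    also have "\<dots> \<le> real (card {N..<n}) * (e / 2)"
      using N by (intro sum_bounded_above) (auto intro: less_imp_le)
    also have "\<dots> \<le> real n * (e / 2)"
      using e by (intro mult_right_mono) auto
    also have "C + real n * (e / 2) < real n * e"
    proof -
      have "2 * C / e < real n" using M n by linarith
      then show ?thesis using e by (simp add: field_simps)
    qed
    finally show "norm (X n / real n - L) < e"
      using n_pos by (simp add: abs_less_iff field_simps)
  qed
qed

lemma powr_diff_ge_mult_diff:
  fixes c d y z :: real
  assumes "1 \<le> d" "0 < c" "c \<le> y" "y \<le> z"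
  shows "c powr (d - 1) * (z - y) \<le> z powr d - y powr d"
proof -
  have "c powr (d - 1) * (z - y) \<le> y powr (d - 1) * (z - y)"
    using assms by (intro mult_right_mono powr_mono2) auto
  also have "\<dots> \<le> z powr (d - 1) * z - y powr (d - 1) * y"
    using assms powr_mono2[of "d - 1" y z] by (simp add: algebra_simps mult_right_mono)
  also have "\<dots> = z powr d - y powr d"
    using assms by (simp add: powr_diff)
  finally show ?thesis .
qed

lemma nat_floor_mult_bounds:
  fixes t :: real and m :: nat
  assumes "0 \<le> t" "0 < m"
  shows "m * nat \<lfloor>t\<rfloor> \<le> nat \<lfloor>m * t\<rfloor> \<and> nat \<lfloor>m * t\<rfloor> < m * (nat \<lfloor>t\<rfloor> + 1)"
proof -
  have t: "real (nat \<lfloor>t\<rfloor>) \<le> t" "t < real (nat \<lfloor>t\<rfloor>) + 1"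
    using assms by linarith+
  have "real (m * nat \<lfloor>t\<rfloor>) \<le> m * t"
    using t(1) by (simp add: mult_left_mono)
  moreover have "m * t < real (m * (nat \<lfloor>t\<rfloor> + 1))"
    using mult_strict_left_mono[OF t(2), of "real m"] assms by (simp add: algebra_simps)
  ultimately have "int (m * nat \<lfloor>t\<rfloor>) \<le> \<lfloor>m * t\<rfloor>" "\<lfloor>m * t\<rfloor> < int (m * (nat \<lfloor>t\<rfloor> + 1))"
    unfolding le_floor_iff floor_less_iff by (simp_all only: of_int_of_nat_eq)
  then show ?thesis
    by linarith
qed

lemma floor_mult_eq_iff_Ico:
  fixes c x :: real
  assumes "0 < c"
  shows "\<lfloor>c * x\<rfloor> = int n \<longleftrightarrow> x \<in> {real n / c ..< (real n + 1) / c}"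
  using assms by (auto simp: floor_eq_iff pos_divide_le_eq pos_less_divide_eq mult.commute)

lemma has_bochner_integral_indicator_Ico_mult:
  fixes u v c :: real
  assumes "u \<le> v"
  shows "has_bochner_integral lebesgue (\<lambda>x. indicator {u..<v} x * c) ((v - u) * c)"
proof -
  have "measure lebesgue {u..<v} = v - u"
    using assms by simp
  then show ?thesis
    using has_bochner_integral_real_indicator[of "{u..<v}" lebesgue] assms
    by (auto intro!: has_bochner_integral_mult_left simp: emeasure_lborel_Ico)
qed

lemma ln_bounds_floor_log:
  fixes b x :: real
  assumes "1 < b" "b \<le> x"
  shows "1 \<le> nat \<lfloor>log b x\<rfloor>"
    and "real (nat \<lfloor>log b x\<rfloor>) * ln b \<le> ln x" and "ln x < (real (nat \<lfloor>log b x\<rfloor>) + 1) * ln b"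
proof -
  have "1 \<le> log b x"
    using assms log_le_cancel_iff[of b b x] by simp
  then have K: "real (nat \<lfloor>log b x\<rfloor>) \<le> log b x" "log b x < real (nat \<lfloor>log b x\<rfloor>) + 1"
    and "1 \<le> nat \<lfloor>log b x\<rfloor>"
    by linarith+
  then show "1 \<le> nat \<lfloor>log b x\<rfloor>" by simp
  have "ln x = log b x * ln b"
    using assms by (simp add: log_def)
  with K assms show "real (nat \<lfloor>log b x\<rfloor>) * ln b \<le> ln x" "ln x < (real (nat \<lfloor>log b x\<rfloor>) + 1) * ln b"
    by (simp_all add: mult_right_mono)
qed

lemma filterlim_nat_floor_log_at_top:
  fixes b :: real
  assumes "1 < b"
  shows "filterlim (\<lambda>x. nat \<lfloor>log b x\<rfloor>) sequentially at_top"
  unfolding filterlim_at_top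
proof
  fix Z :: nat
  show "eventually (\<lambda>x. Z \<le> nat \<lfloor>log b x\<rfloor>) at_top"
    using eventually_ge_at_top[of "b ^ Z"]
  proof eventually_elim
    case (elim x)
    then have "log b (b ^ Z) \<le> log b x"
      using assms by (subst log_le_cancel_iff) (auto intro: less_le_trans[of 0 "b ^ Z"])
    then show ?case
      using assms by (simp add: le_nat_floor)
  qed
qed

lemma LIMSEQ_Cesaro_shift:
  fixes P :: "nat \<Rightarrow> real"
  assumes "(\<lambda>K. P K / real K) \<longlonglongrightarrow> J"
  shows "(\<lambda>K. P K / (real K + 1)) \<longlonglongrightarrow> J" "(\<lambda>K. P (Suc K) / real K) \<longlonglongrightarrow> J"
proof -
  have "(\<lambda>K. P K / real K * (real K / real (Suc K))) \<longlonglongrightarrow> J * 1"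
    by (intro tendsto_mult assms LIMSEQ_n_over_Suc_n)
  moreover have "\<forall>\<^sub>F K in sequentially. P K / real K * (real K / real (Suc K)) = P K / (real K + 1)"
    using eventually_gt_at_top[of 0] by eventually_elim simp
  ultimately show "(\<lambda>K. P K / (real K + 1)) \<longlonglongrightarrow> J"
    by (simp add: Lim_transform_eventually)
  have "(\<lambda>K. P (Suc K) / real (Suc K) * (real (Suc K) / real K)) \<longlonglongrightarrow> J * 1"
    by (intro tendsto_mult LIMSEQ_Suc[OF assms] LIMSEQ_Suc_n_over_n)
  moreover have "\<forall>\<^sub>F K in sequentially. P (Suc K) / real (Suc K) * (real (Suc K) / real K) = P (Suc K) / real K"
    using eventually_gt_at_top[of 0] by eventually_elim simp
  ultimately show "(\<lambda>K. P (Suc K) / real K) \<longlonglongrightarrow> J"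
    by (simp add: Lim_transform_eventually)
qed

lemma tendsto_div_ln_if_Cesaro:
  fixes P :: "nat \<Rightarrow> real" and S :: "real \<Rightarrow> real" and b J :: real
  assumes b: "1 < b" and P: "(\<lambda>K. P K / real K) \<longlonglongrightarrow> J" and P_nonneg: "\<And>K. 0 \<le> P K"
    and S: "\<And>x. b \<le> x \<Longrightarrow> P (nat \<lfloor>log b x\<rfloor>) \<le> S x \<and> S x \<le> P (Suc (nat \<lfloor>log b x\<rfloor>))"
  shows "((\<lambda>x. (1 / ln x) * S x) \<longlongrightarrow> (1 / ln b) * J) at_top"
proof -
  define K where "K x = nat \<lfloor>log b x\<rfloor>" for x
  have lnb: "0 < ln b"
    using b by simp
  have lower: "(\<lambda>K. P K / ((real K + 1) * ln b)) \<longlonglongrightarrow> (1 / ln b) * J"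
    using tendsto_divide[OF LIMSEQ_Cesaro_shift(1)[OF P] tendsto_const, of "ln b"] lnb
    by (simp add: field_simps)
  have upper: "(\<lambda>K. P (Suc K) / (real K * ln b)) \<longlonglongrightarrow> (1 / ln b) * J"
    using tendsto_divide[OF LIMSEQ_Cesaro_shift(2)[OF P] tendsto_const, of "ln b"] lnb
    by (simp add: field_simps)
  have bounds: "P (K x) / ((real (K x) + 1) * ln b) \<le> (1 / ln x) * S x
      \<and> (1 / ln x) * S x \<le> P (Suc (K x)) / (real (K x) * ln b)" if x: "b \<le> x" for x
  proof -
    note ln_x = ln_bounds_floor_log[OF b x, folded K_def]
    have Kb: "0 < real (K x) * ln b"
      using ln_x(1) lnb by simp
    have "P (K x) / ((real (K x) + 1) * ln b) \<le> P (K x) / ln x"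
      using P_nonneg ln_x Kb by (intro divide_left_mono) auto
    also have "\<dots> \<le> S x / ln x"
      using S[OF x] ln_x Kb by (intro divide_right_mono) (auto simp: K_def)
    moreover have "S x / ln x \<le> P (Suc (K x)) / ln x"
      using S[OF x] ln_x Kb by (intro divide_right_mono) (auto simp: K_def)
    moreover have "\<dots> \<le> P (Suc (K x)) / (real (K x) * ln b)"
      using P_nonneg ln_x Kb by (intro divide_left_mono) auto
    ultimately show ?thesis
      by simp
  qed
  show ?thesis
  proof (rule tendsto_sandwich)
    show "\<forall>\<^sub>F x in at_top. P (K x) / ((real (K x) + 1) * ln b) \<le> 1 / ln x * S x"
      "\<forall>\<^sub>F x in at_top. 1 / ln x * S x \<le> P (Suc (K x)) / (real (K x) * ln b)"
      using eventually_ge_at_top[of b] by (eventually_elim, use bounds in blast)+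
    show "((\<lambda>x. P (K x) / ((real (K x) + 1) * ln b)) \<longlongrightarrow> 1 / ln b * J) at_top"
      unfolding K_def by (rule filterlim_compose[OF lower filterlim_nat_floor_log_at_top[OF b]])
    show "((\<lambda>x. P (Suc (K x)) / (real (K x) * ln b)) \<longlongrightarrow> 1 / ln b * J) at_top"
      unfolding K_def by (rule filterlim_compose[OF upper filterlim_nat_floor_log_at_top[OF b]])
  qed
qed

lemma LIMSEQ_nat_floor_pow_mult_div_pow:
  fixes b x :: real
  assumes "1 < b" "0 \<le> x"
  shows "(\<lambda>k. real (nat \<lfloor>b ^ k * x\<rfloor>) / b ^ k) \<longlonglongrightarrow> x"
proof (rule tendsto_sandwich)
  have floor: "b ^ k * x - 1 \<le> real (nat \<lfloor>b ^ k * x\<rfloor>)" "real (nat \<lfloor>b ^ k * x\<rfloor>) \<le> b ^ k * x" for k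
  proof -
    have "0 \<le> b ^ k * x" using assms by simp
    then show "b ^ k * x - 1 \<le> real (nat \<lfloor>b ^ k * x\<rfloor>)" "real (nat \<lfloor>b ^ k * x\<rfloor>) \<le> b ^ k * x"
      by linarith+
  qed
  have pos: "0 < b ^ k" for k
    using assms by simp
  show "\<forall>\<^sub>F k in sequentially. x - inverse (b ^ k) \<le> real (nat \<lfloor>b ^ k * x\<rfloor>) / b ^ k"
  proof (intro always_eventually allI)
    fix k
    have "x - inverse (b ^ k) = (b ^ k * x - 1) / b ^ k"
      using assms(1) by (simp add: diff_divide_distrib inverse_eq_divide)
    also have "\<dots> \<le> real (nat \<lfloor>b ^ k * x\<rfloor>) / b ^ k"
      using floor(1) pos[of k] by (intro divide_right_mono) auto
    finally show "x - inverse (b ^ k) \<le> real (nat \<lfloor>b ^ k * x\<rfloor>) / b ^ k" .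
  qed
  show "\<forall>\<^sub>F k in sequentially. real (nat \<lfloor>b ^ k * x\<rfloor>) / b ^ k \<le> x"
    using floor(2) pos by (intro always_eventually allI) (simp add: field_simps)
  show "(\<lambda>k. x - inverse (b ^ k)) \<longlonglongrightarrow> x"
    using tendsto_diff[OF tendsto_const LIMSEQ_inverse_realpow_zero[OF assms(1)]] by simp
qed simp

section \<open>The digit-substitution sequence\<close>

locale digit_substitution =
  fixes p s :: nat and A :: "nat set"
  assumes p_ge_3: "3 \<le> p" and s_ge_2: "2 \<le> s" and s_less_p: "s < p"
    and A_subset: "A \<subseteq> {0..<p}" and card_A: "card A = s"
begin

abbreviation "h \<equiv> hmap A"
abbreviation "a \<equiv> aseq p s A"

lemma finite_A: "finite A"
  using A_subset finite_subset by blast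

lemma hmap_in_A: "e < s \<Longrightarrow> h e \<in> A"
  unfolding hmap_def using finite_A card_A
  by (metis length_sorted_list_of_set nth_mem set_sorted_list_of_set)

lemma hmap_less_p: "e < s \<Longrightarrow> h e < p"
  using hmap_in_A[of e] A_subset by auto

lemma hmap_strict_mono: "e < e' \<Longrightarrow> e' < s \<Longrightarrow> h e < h e'"
  unfolding hmap_def using finite_A card_A
  by (metis length_sorted_list_of_set sorted_wrt_nth_less strict_sorted_list_of_set)

lemma hmap_ge: "e < s \<Longrightarrow> e \<le> h e"
proof (induction e)
  case (Suc e)
  then show ?case using hmap_strict_mono[of e "Suc e"] by simp
qed simp

lemma finite_pow_le: "finite {i. s ^ i \<le> n}"
proof (rule finite_subset)
  show "{i. s ^ i \<le> n} \<subseteq> {..<n}"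
  proof
    fix i assume "i \<in> {i. s ^ i \<le> n}"
    then have "s ^ i \<le> n" by simp
    moreover have "i < 2 ^ i" by (rule less_exp)
    moreover have "(2::nat) ^ i \<le> s ^ i" using s_ge_2 by (simp add: power_mono)
    ultimately have "i < n" by linarith
    then show "i \<in> {..<n}" by simp
  qed
qed simp

lemma pow_le_append_digit:
  assumes "1 \<le> n" "e < s"
  shows "{i. s ^ i \<le> s * n + e} = insert 0 (Suc ` {i. s ^ i \<le> n})"
proof (intro set_eqI iffI)
  fix i assume i: "i \<in> {i. s ^ i \<le> s * n + e}"
  show "i \<in> insert 0 (Suc ` {i. s ^ i \<le> n})"
  proof (cases i)
    case (Suc j)
    have "s ^ j \<le> n"
    proof (rule ccontr)
      assume "\<not> s ^ j \<le> n"
      then have "s * (n + 1) \<le> s * s ^ j" by (intro mult_le_mono2) simp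
      then show False using i Suc assms by (simp add: algebra_simps)
    qed
    then show ?thesis using Suc by simp
  qed simp
next
  fix i assume "i \<in> insert 0 (Suc ` {i. s ^ i \<le> n})"
  then show "i \<in> {i. s ^ i \<le> s * n + e}"
    using assms s_ge_2 by (auto simp: trans_le_add1 mult_le_mono)
qed

lemma aseq_append_digit:
  assumes n: "1 \<le> n" and e: "e < s"
  shows "a (s * n + e) = p * a n + h e"
proof -
  let ?m = "s * n + e"
  have m_digits: "(?m div s ^ Suc i) mod s = (n div s ^ i) mod s" for i
    using e by (simp only: power_Suc div_mult2_eq) simp
  have "a ?m = (\<Sum>i\<in>insert 0 (Suc ` {i. s ^ i \<le> n}). h ((?m div s ^ i) mod s) * p ^ i)"
    unfolding aseq_def pow_le_append_digit[OF assms] using n s_ge_2 by simp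
  also have "\<dots> = h e + (\<Sum>i\<in>{i. s ^ i \<le> n}. h ((?m div s ^ Suc i) mod s) * p ^ Suc i)"
    using finite_pow_le e by (subst sum.insert) (auto simp: sum.reindex)
  also have "\<dots> = p * a n + h e"
    unfolding aseq_def m_digits using n by (simp add: sum_distrib_left mult_ac)
  finally show ?thesis .
qed

lemma aseq_single_digit:
  assumes "1 \<le> e" "e < s"
  shows "a e = h e"
proof -
  have "s ^ i \<le> e \<longleftrightarrow> i = 0" for i
  proof (cases i)
    case (Suc j)
    have "e < s * s ^ j" using assms s_ge_2 by (simp add: less_le_trans[of e s])
    then show ?thesis using Suc by simp
  qed (use assms in simp)
  then show ?thesis
    unfolding aseq_def using assms by simp
qed

lemma aseq_div_mod: "1 \<le> m div s \<Longrightarrow> a m = p * a (m div s) + h (m mod s)"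
  using aseq_append_digit[of "m div s" "m mod s"] s_ge_2 by simp

lemma aseq_block_bounds:
  assumes "1 \<le> n" "s ^ i * n \<le> m" "m < s ^ i * (n + 1)"
  shows "p ^ i * a n \<le> a m \<and> a m + 1 \<le> p ^ i * (a n + 1)"
  using assms(2,3)
proof (induction i arbitrary: m)
  case (Suc i)
  let ?m = "m div s"
  have "s ^ i * n \<le> ?m" "?m < s ^ i * (n + 1)"
    using Suc.prems s_ge_2 by (simp_all add: less_eq_div_iff_mult_less_eq div_less_iff_less_mult mult_ac)
  moreover have "1 \<le> s ^ i * n"
    using assms(1) s_ge_2 by (simp add: one_le_mult_iff)
  ultimately have IH: "p ^ i * a n \<le> a ?m" "a ?m + 1 \<le> p ^ i * (a n + 1)" and "1 \<le> ?m"
    using Suc.IH by (auto simp del: One_nat_def)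
  have a_m: "a m = p * a ?m + h (m mod s)"
    using aseq_div_mod[OF \<open>1 \<le> ?m\<close>] .
  have "h (m mod s) + 1 \<le> p"
    using hmap_less_p[of "m mod s"] s_ge_2 by simp
  then have "a m + 1 \<le> p * (a ?m + 1)"
    using a_m by simp
  also have "\<dots> \<le> p * (p ^ i * (a n + 1))"
    using IH(2) by (rule mult_le_mono2)
  also have "\<dots> = p ^ Suc i * (a n + 1)"
    by (simp add: algebra_simps)
  finally show ?case
    using a_m IH(1) by (simp add: mult.assoc trans_le_add1)
qed (simp add: le_antisym less_Suc_eq_le)

lemma aseq_bounds:
  assumes "1 \<le> n" "n < s ^ K"
  shows "1 \<le> a n \<and> a n < p ^ K"
  using assms
proof (induction K arbitrary: n)
  case (Suc K)
  show ?case
  proof (cases "n < s")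
    case True
    then have "1 \<le> h n \<and> h n < p"
      using hmap_ge hmap_less_p Suc.prems by (meson le_trans)
    moreover have "p \<le> p ^ Suc K"
      using p_ge_3 by simp
    ultimately show ?thesis
      using aseq_single_digit Suc.prems True by (auto intro: less_le_trans)
  next
    case False
    then have "1 \<le> n div s" "n div s < s ^ K"
      using Suc.prems s_ge_2 by (simp_all add: less_eq_div_iff_mult_less_eq div_less_iff_less_mult mult_ac)
    with Suc.IH have IH: "1 \<le> a (n div s)" "a (n div s) < p ^ K"
      by auto
    have a_n: "a n = p * a (n div s) + h (n mod s)"
      using aseq_div_mod[OF \<open>1 \<le> n div s\<close>] .
    have "h (n mod s) + 1 \<le> p"
      using hmap_less_p[of "n mod s"] s_ge_2 by simp
    then have "a n + 1 \<le> p * p ^ K"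
      using a_n IH(2) mult_le_mono2[of "a (n div s) + 1" "p ^ K" p] by simp
    moreover have "1 \<le> a n"
      using a_n IH(1) p_ge_3 by (simp add: trans_le_add1 one_le_mult_iff)
    ultimately show ?thesis
      by simp
  qed
qed simp

section \<open>The limit function lambda\<close>

abbreviation "r \<equiv> real s"
abbreviation "q \<equiv> real p"
abbreviation "d \<equiv> log (real s) (real p)"
(* a fundamental domain of y -> s * y on the positive reals *)
abbreviation "fund \<equiv> {1 / real s..<1::real}"

lemma one_less_r: "1 < r"
  using s_ge_2 by simp

lemma one_less_q: "1 < q"
  using p_ge_3 by simp

lemma one_less_d: "1 < d"
  using one_less_r s_less_p log_less_cancel_iff[of r r q] by simp

lemma pow_powr_d: "(r ^ k) powr d = q ^ k"
proof -
  have "(r ^ k) powr d = (r powr d) powr real k"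
    using one_less_r by (simp add: powr_realpow[symmetric] powr_powr mult.commute)
  then show ?thesis
    using one_less_r one_less_q by (simp add: powr_realpow)
qed

lemma pow_mult_powr_d: "0 \<le> y \<Longrightarrow> (r ^ k * y) powr d = q ^ k * y powr d"
  by (simp add: powr_mult pow_powr_d)

lemma fund_pos: "y \<in> fund \<Longrightarrow> 0 < y"
  using one_less_r by (auto intro: less_le_trans[of 0 "1 / r"])

lemma fund_iff_floor:
  assumes "1 \<le> k"
  shows "y \<in> fund \<longleftrightarrow> int (s ^ (k - 1)) \<le> \<lfloor>r ^ k * y\<rfloor> \<and> \<lfloor>r ^ k * y\<rfloor> < int (s ^ k)"
proof -
  have "r ^ k = r * r ^ (k - 1)"
    using assms by (cases k) auto
  then have "1 / r \<le> y \<longleftrightarrow> r ^ (k - 1) \<le> r ^ k * y"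
    using one_less_r by (auto simp: divide_le_eq mult.assoc mult.commute[of r])
  moreover have "y < 1 \<longleftrightarrow> r ^ k * y < r ^ k"
    using one_less_r by simp
  ultimately show ?thesis
    unfolding le_floor_iff floor_less_iff by simp
qed

(* for y in fund, the number whose base-s digits are the first k digits of y *)
definition lead :: "nat \<Rightarrow> real \<Rightarrow> nat" where
  "lead k y = nat \<lfloor>r ^ k * y\<rfloor>"

lemma lead_range:
  assumes "y \<in> fund" "1 \<le> k"
  shows "s ^ (k - 1) \<le> lead k y" "lead k y < s ^ k" "1 \<le> lead k y"
proof -
  show "s ^ (k - 1) \<le> lead k y" "lead k y < s ^ k"
    using assms fund_iff_floor[of k y] unfolding lead_def by linarith+
  moreover have "1 \<le> s ^ (k - 1)"
    using s_ge_2 by simp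
  ultimately show "1 \<le> lead k y"
    by linarith
qed

lemma lead_shift:
  assumes "0 \<le> y"
  shows "s ^ i * lead j y \<le> lead (j + i) y \<and> lead (j + i) y < s ^ i * (lead j y + 1)"
  using nat_floor_mult_bounds[of "r ^ j * y" "s ^ i"] assms s_ge_2
  unfolding lead_def by (simp add: power_add mult_ac)

definition Lam_approx :: "nat \<Rightarrow> real \<Rightarrow> real" where
  "Lam_approx k y = real (a (lead k y)) / q ^ k"

lemma Lam_approx_block:
  assumes y: "y \<in> fund" and "1 \<le> j" "j \<le> k"
  shows "Lam_approx j y \<le> Lam_approx k y \<and> Lam_approx k y \<le> (real (a (lead j y)) + 1) / q ^ j"
proof -
  obtain i where k: "k = j + i"
    using \<open>j \<le> k\<close> le_Suc_ex by blast
  have "p ^ i * a (lead j y) \<le> a (lead k y) \<and> a (lead k y) + 1 \<le> p ^ i * (a (lead j y) + 1)"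
    unfolding k using aseq_block_bounds[OF lead_range(3)[OF y \<open>1 \<le> j\<close>]]
      lead_shift[OF less_imp_le[OF fund_pos[OF y]]] by blast
  then have "real (p ^ i * a (lead j y)) \<le> real (a (lead k y))"
    "real (a (lead k y)) \<le> real (p ^ i * (a (lead j y) + 1))"
    by (simp_all only: of_nat_le_iff) simp
  then have "q ^ i * real (a (lead j y)) \<le> real (a (lead k y))"
    "real (a (lead k y)) \<le> q ^ i * (real (a (lead j y)) + 1)"
    by (simp_all add: distrib_left)
  moreover have "0 < q ^ i" "0 < q ^ j" "q ^ k = q ^ j * q ^ i"
    using one_less_q k by (simp_all add: power_add)
  ultimately show ?thesis
    unfolding Lam_approx_def by (simp add: field_simps)
qed

lemma Lam_approx_bounds:
  assumes "y \<in> fund" "1 \<le> k"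
  shows "1 / q ^ k \<le> Lam_approx k y" "Lam_approx k y \<le> 1"
proof -
  have "1 \<le> a (lead k y)" "a (lead k y) \<le> p ^ k"
    using aseq_bounds lead_range[OF assms] by (auto simp: less_imp_le)
  then have "1 \<le> real (a (lead k y))" "real (a (lead k y)) \<le> q ^ k"
    by (simp_all flip: of_nat_power)
  then show "1 / q ^ k \<le> Lam_approx k y" "Lam_approx k y \<le> 1"
    unfolding Lam_approx_def using one_less_q by (simp_all add: divide_right_mono)
qed

definition Lam :: "real \<Rightarrow> real" where
  "Lam y = lim (\<lambda>k. Lam_approx k y)"

lemma Lam_approx_LIMSEQ:
  assumes "y \<in> fund"
  shows "(\<lambda>k. Lam_approx k y) \<longlonglongrightarrow> Lam y"
proof -
  have "incseq (\<lambda>k. Lam_approx (Suc k) y)"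
    using Lam_approx_block[OF assms] by (intro incseq_SucI) simp
  moreover have "\<forall>k. Lam_approx (Suc k) y \<le> 1"
    using Lam_approx_bounds(2)[OF assms] by simp
  ultimately obtain L where "(\<lambda>k. Lam_approx (Suc k) y) \<longlonglongrightarrow> L"
    using incseq_convergent by blast
  then have "(\<lambda>k. Lam_approx k y) \<longlonglongrightarrow> L"
    by (rule LIMSEQ_imp_Suc)
  then show ?thesis
    unfolding Lam_def by (simp add: limI)
qed

lemma Lam_bounds:
  assumes "y \<in> fund" "1 \<le> j"
  shows "Lam_approx j y \<le> Lam y" "Lam y \<le> (real (a (lead j y)) + 1) / q ^ j"
  using Lam_approx_block[OF assms]
  by (intro LIMSEQ_le_const[OF Lam_approx_LIMSEQ[OF assms(1)]] LIMSEQ_le_const2[OF Lam_approx_LIMSEQ[OF assms(1)]];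
      blast)+

lemma Lam_pos: "y \<in> fund \<Longrightarrow> 0 < Lam y"
  using Lam_approx_bounds(1)[of y 1] Lam_bounds(1)[of y 1] one_less_q
  by (simp add: less_le_trans[of 0 "1 / q"])

lemma lam_LIMSEQ:
  assumes "y \<in> fund"
  shows "(\<lambda>k. real (a (lead k y)) / (r ^ k * y) powr d) \<longlonglongrightarrow> Lam y / y powr d"
proof -
  have "(\<lambda>k. Lam_approx k y / y powr d) \<longlonglongrightarrow> Lam y / y powr d"
    using fund_pos[OF assms] by (intro tendsto_divide Lam_approx_LIMSEQ[OF assms] tendsto_const) simp
  moreover have "Lam_approx k y / y powr d = real (a (lead k y)) / (r ^ k * y) powr d" for k
    using fund_pos[OF assms] by (simp add: Lam_approx_def pow_mult_powr_d)
  ultimately show ?thesis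
    by simp
qed

lemma lam_eq_Lam: "y \<in> fund \<Longrightarrow> lam p s A y = Lam y / y powr d"
  using lam_LIMSEQ unfolding lam_def afun_def lead_def by (simp add: limI)

lemma lam_pos: "y \<in> fund \<Longrightarrow> 0 < lam p s A y"
  using Lam_pos[of y] fund_pos[of y] by (simp add: lam_eq_Lam)

lemma borel_measurable_lam_on_fund: "(\<lambda>x. indicator fund x * lam p s A x) \<in> borel_measurable borel"
proof (rule borel_measurable_LIMSEQ_metric)
  fix k
  show "(\<lambda>x. indicator fund x * (real (a (nat \<lfloor>r ^ k * x\<rfloor>)) / (r ^ k * x) powr d)) \<in> borel_measurable borel"
    by measurable
  show "(\<lambda>k. indicator fund x * (real (a (nat \<lfloor>r ^ k * x\<rfloor>)) / (r ^ k * x) powr d))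
      \<longlonglongrightarrow> indicator fund x * lam p s A x" for x
    using lam_LIMSEQ[of x] by (cases "x \<in> fund") (simp_all add: lam_eq_Lam lead_def)
qed

lemma sets_level_sets_lam:
  "{x \<in> fund. lam p s A x \<le> \<alpha>} \<in> sets borel" "{x \<in> fund. lam p s A x = \<alpha>} \<in> sets borel"
proof -
  note [measurable] = borel_measurable_lam_on_fund
  have "{x \<in> fund. lam p s A x \<le> \<alpha>} = fund \<inter> {x. indicator fund x * lam p s A x \<le> \<alpha>}"
    "{x \<in> fund. lam p s A x = \<alpha>} = fund \<inter> {x. indicator fund x * lam p s A x = \<alpha>}"
    by auto
  then show "{x \<in> fund. lam p s A x \<le> \<alpha>} \<in> sets borel" "{x \<in> fund. lam p s A x = \<alpha>} \<in> sets borel"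
    by simp_all
qed

section \<open>Level sets of lambda\<close>

(* Lam = lambda * y^d varies by at most p^-j on points with the same first j digits, while y^d grows
   at rate at least (1/s)^(d-1) = s/p on fund. *)
lemma level_set_lam_close:
  assumes "0 < \<alpha>" "1 \<le> j"
    and y: "y \<in> fund" "lam p s A y = \<alpha>" and z: "z \<in> fund" "lam p s A z = \<alpha>"
    and lead_eq: "lead j y = lead j z"
  shows "\<bar>z - y\<bar> \<le> (q / r) * (1 / (\<alpha> * q ^ j))"
proof -
  have "(r / q) * (v - u) \<le> 1 / (\<alpha> * q ^ j)"
    if u: "u \<in> fund" "lam p s A u = \<alpha>" and v: "v \<in> fund" "lam p s A v = \<alpha>"
      and "u \<le> v" "lead j u = lead j v" for u v
  proof -
    have "\<alpha> * (v powr d - u powr d) = Lam v - Lam u"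
      using u v fund_pos[OF u(1)] fund_pos[OF v(1)] by (auto simp: lam_eq_Lam field_simps)
    also have "\<dots> \<le> 1 / q ^ j"
      using Lam_bounds(1)[OF u(1) \<open>1 \<le> j\<close>] Lam_bounds(2)[OF v(1) \<open>1 \<le> j\<close>] \<open>lead j u = lead j v\<close>
      by (simp add: Lam_approx_def add_divide_distrib)
    finally have "v powr d - u powr d \<le> 1 / (\<alpha> * q ^ j)"
      using \<open>0 < \<alpha>\<close> one_less_q by (simp add: le_divide_eq mult_ac)
    moreover have "(1 / r) powr (d - 1) = r / q"
      using one_less_r one_less_q by (simp add: powr_divide powr_diff)
    then have "(r / q) * (v - u) \<le> v powr d - u powr d"
      using powr_diff_ge_mult_diff[of d "1 / r" u v] one_less_d one_less_r u \<open>u \<le> v\<close> by simp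
    ultimately show ?thesis
      by linarith
  qed
  then have "(r / q) * \<bar>z - y\<bar> \<le> 1 / (\<alpha> * q ^ j)"
    using y z lead_eq by (cases "y \<le> z") (auto simp: abs_if)
  then have "(q / r) * ((r / q) * \<bar>z - y\<bar>) \<le> (q / r) * (1 / (\<alpha> * q ^ j))"
    using one_less_r one_less_q by (intro mult_left_mono) auto
  then show ?thesis
    using one_less_r one_less_q by simp
qed

lemma emeasure_level_set_lam_le:
  assumes "0 < \<alpha>" "1 \<le> j"
  shows "emeasure lebesgue {x \<in> fund. lam p s A x = \<alpha>} \<le> ennreal (2 * q / (r * \<alpha>) * (r / q) ^ j)"
proof -
  let ?Z = "{x \<in> fund. lam p s A x = \<alpha>}"
  define w where "w = (q / r) * (1 / (\<alpha> * q ^ j))"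
  have "0 \<le> w"
    unfolding w_def using assms one_less_r one_less_q by simp
  define c where "c n = (SOME y. y \<in> ?Z \<and> lead j y = n)" for n
  have cover: "?Z \<subseteq> (\<Union>n\<in>{1..<s ^ j}. {c n - w .. c n + w})"
  proof
    fix y assume y: "y \<in> ?Z"
    then have c: "c (lead j y) \<in> ?Z \<and> lead j (c (lead j y)) = lead j y"
      unfolding c_def by (intro someI_ex[of "\<lambda>z. z \<in> ?Z \<and> lead j z = lead j y"]) blast
    have "\<bar>y - c (lead j y)\<bar> \<le> w"
      unfolding w_def using c y by (intro level_set_lam_close[OF assms]) auto
    moreover have "lead j y \<in> {1..<s ^ j}"
      using lead_range[of y j] y assms by auto
    ultimately show "y \<in> (\<Union>n\<in>{1..<s ^ j}. {c n - w .. c n + w})"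
      by force
  qed
  have "emeasure lebesgue ?Z \<le> emeasure lebesgue (\<Union>n\<in>{1..<s ^ j}. {c n - w .. c n + w})"
    using cover by (intro emeasure_mono) auto
  also have "\<dots> \<le> (\<Sum>n\<in>{1..<s ^ j}. emeasure lebesgue {c n - w .. c n + w})"
    by (intro emeasure_subadditive_finite) auto
  also have "\<dots> = ennreal (real (card {1..<s ^ j}) * (2 * w))"
    using \<open>0 \<le> w\<close> by (simp add: ennreal_mult ennreal_of_nat_eq_real_of_nat)
  also have "\<dots> \<le> ennreal (2 * q / (r * \<alpha>) * (r / q) ^ j)"
  proof (rule ennreal_leI)
    have "real (card {1..<s ^ j}) * (2 * w) \<le> r ^ j * (2 * w)"
      using \<open>0 \<le> w\<close> by (intro mult_right_mono) auto
    also have "\<dots> = 2 * q / (r * \<alpha>) * (r / q) ^ j"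
      unfolding w_def using one_less_r one_less_q assms by (simp add: field_simps power_divide)
    finally show "real (card {1..<s ^ j}) * (2 * w) \<le> 2 * q / (r * \<alpha>) * (r / q) ^ j" .
  qed
  finally show ?thesis .
qed

lemma null_sets_level_set_lam: "{x \<in> fund. lam p s A x = \<alpha>} \<in> null_sets lebesgue"
proof (cases "0 < \<alpha>")
  case True
  have "(\<lambda>j. ennreal (2 * q / (r * \<alpha>) * (r / q) ^ j)) \<longlonglongrightarrow> ennreal (2 * q / (r * \<alpha>) * 0)"
    using one_less_r s_less_p by (intro tendsto_ennrealI tendsto_mult tendsto_const LIMSEQ_power_zero) auto
  then have "emeasure lebesgue {x \<in> fund. lam p s A x = \<alpha>} \<le> 0"
    using emeasure_level_set_lam_le[OF True] by (intro LIMSEQ_le_const) auto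
  then show ?thesis
    using sets_level_sets_lam(2)[of \<alpha>] by (intro null_setsI) auto
next
  case False
  then have "{x \<in> fund. lam p s A x = \<alpha>} = {}"
    using lam_pos by force
  then show ?thesis
    by (metis null_sets.empty_sets)
qed

lemma bseq_lead_LIMSEQ:
  assumes x: "x \<in> fund"
  shows "(\<lambda>k. bseq p s A (lead k x)) \<longlonglongrightarrow> lam p s A x"
proof -
  have lead_LIMSEQ: "(\<lambda>k. real (lead k x) / r ^ k) \<longlonglongrightarrow> x"
    unfolding lead_def using LIMSEQ_nat_floor_pow_mult_div_pow[OF one_less_r] fund_pos[OF x] by simp
  have "(\<lambda>k. Lam_approx k x / (real (lead k x) / r ^ k) powr d) \<longlonglongrightarrow> Lam x / x powr d"
    using fund_pos[OF x] by (intro tendsto_divide Lam_approx_LIMSEQ[OF x] tendsto_powr lead_LIMSEQ tendsto_const) auto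
  moreover have "Lam_approx k x / (real (lead k x) / r ^ k) powr d = bseq p s A (lead k x)" for k
  proof -
    have "real (lead k x) powr d = q ^ k * (real (lead k x) / r ^ k) powr d"
      using pow_mult_powr_d[of "real (lead k x) / r ^ k" k] one_less_r by simp
    then show ?thesis
      unfolding bseq_def Lam_approx_def using one_less_q by (simp add: field_simps)
  qed
  ultimately show ?thesis
    using lam_eq_Lam[OF x] by simp
qed

section \<open>Logarithmic density\<close>

definition weight :: "real \<Rightarrow> nat \<Rightarrow> real" where
  "weight \<alpha> n = (if bseq p s A n \<le> \<alpha> then 1 / real n else 0)"

definition step :: "real \<Rightarrow> nat \<Rightarrow> real \<Rightarrow> real" where
  "step \<alpha> K x = indicator fund x * (r ^ K * weight \<alpha> (lead K x))"

lemma step_eq_sum: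
  assumes "1 \<le> K"
  shows "step \<alpha> K x =
    (\<Sum>n\<in>{s ^ (K - 1)..<s ^ K}. indicator {real n / r ^ K ..< (real n + 1) / r ^ K} x * (r ^ K * weight \<alpha> n))"
proof -
  let ?N = "{s ^ (K - 1)..<s ^ K}"
  have "indicator {real n / r ^ K ..< (real n + 1) / r ^ K} x * (r ^ K * weight \<alpha> n)
      = (if \<lfloor>r ^ K * x\<rfloor> = int n then r ^ K * weight \<alpha> n else 0)" for n
    using floor_mult_eq_iff_Ico[of "r ^ K" x n] one_less_r by (simp add: indicator_def)
  then have "(\<Sum>n\<in>?N. indicator {real n / r ^ K ..< (real n + 1) / r ^ K} x * (r ^ K * weight \<alpha> n))
      = (\<Sum>n\<in>?N. if \<lfloor>r ^ K * x\<rfloor> = int n then r ^ K * weight \<alpha> n else 0)"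
    by simp
  also have "\<dots> = step \<alpha> K x"
  proof (cases "x \<in> fund")
    case True
    then have "lead K x \<in> ?N"
      using lead_range[OF True assms] by simp
    moreover have "\<lfloor>r ^ K * x\<rfloor> = int n \<longleftrightarrow> n = lead K x" for n
      using fund_iff_floor[OF assms, of x] True unfolding lead_def by linarith
    moreover have "indicator fund x = (1::real)"
      using True by simp
    ultimately show ?thesis
      by (simp add: step_def)
  next
    case False
    then have "\<lfloor>r ^ K * x\<rfloor> \<noteq> int n" if "n \<in> ?N" for n
      using fund_iff_floor[OF assms, of x] that by auto
    moreover have "indicator fund x = (0::real)"
      using False by simp
    ultimately show ?thesis
      by (simp add: step_def)
  qed
  finally show ?thesis ..
qed

lemma has_bochner_integral_step:
  assumes "1 \<le> K"
  shows "has_bochner_integral lebesgue (step \<alpha> K) (\<Sum>n\<in>{s ^ (K - 1)..<s ^ K}. weight \<alpha> n)"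
proof -
  have "has_bochner_integral lebesgue
      (\<lambda>x. indicator {real n / r ^ K ..< (real n + 1) / r ^ K} x * (r ^ K * weight \<alpha> n)) (weight \<alpha> n)" for n
  proof -
    have "real n / r ^ K \<le> (real n + 1) / r ^ K"
      using one_less_r by (simp add: divide_right_mono)
    moreover have "((real n + 1) / r ^ K - real n / r ^ K) * (r ^ K * weight \<alpha> n) = weight \<alpha> n"
      using one_less_r by (simp add: diff_divide_distrib[symmetric])
    ultimately show ?thesis
      using has_bochner_integral_indicator_Ico_mult by metis
  qed
  then show ?thesis
    unfolding step_eq_sum[OF assms, abs_def] by (intro has_bochner_integral_sum)
qed

lemma step_bound: "\<bar>step \<alpha> K x\<bar> \<le> indicator fund x * r"
proof (cases "x \<in> fund \<and> 1 \<le> K")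
  case True
  have lead_ge: "r ^ (K - 1) \<le> real (lead K x)"
    using lead_range(1)[of x K] True by (simp flip: of_nat_power)
  have pos: "0 < r ^ (K - 1)"
    using one_less_r by simp
  have "1 / real (lead K x) \<le> 1 / r ^ (K - 1)"
    using lead_ge pos by (intro divide_left_mono mult_pos_pos) linarith+
  then have "weight \<alpha> (lead K x) \<le> 1 / r ^ (K - 1)"
    unfolding weight_def using pos by auto
  then have "r ^ K * weight \<alpha> (lead K x) \<le> r ^ K * (1 / r ^ (K - 1))"
    using one_less_r by (intro mult_left_mono) auto
  also have "\<dots> = r"
    using True one_less_r by (cases K) auto
  finally show ?thesis
    using True by (simp add: step_def weight_def)
next
  case False
  then consider "x \<notin> fund" | "x \<in> fund" "K = 0"
    by linarith
  then show ?thesis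
  proof cases
    case 2
    \<comment> \<open>here the junk value 1 / real 0 = 0 makes the step function vanish\<close>
    then have "lead K x = 0"
      unfolding lead_def by (simp add: floor_eq_iff)
    then show ?thesis
      using one_less_r by (simp add: step_def weight_def)
  qed (simp add: step_def)
qed

lemma step_measurable: "step \<alpha> K \<in> borel_measurable lebesgue"
proof -
  have "(\<lambda>x. indicator fund x * (r ^ K * weight \<alpha> (nat \<lfloor>r ^ K * x\<rfloor>))) \<in> borel_measurable borel"
    by measurable
  then show ?thesis
    unfolding step_def lead_def by (intro measurable_completion) simp
qed

lemma step_LIMSEQ:
  assumes "x \<notin> {x \<in> fund. lam p s A x = \<alpha>}"
  shows "(\<lambda>K. step \<alpha> K x) \<longlonglongrightarrow> indicator {x \<in> fund. lam p s A x \<le> \<alpha>} x * (1 / x)"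
proof (cases "x \<in> fund")
  case x: True
  show ?thesis
  proof (cases "lam p s A x < \<alpha>")
    case True
    then have "\<forall>\<^sub>F K in sequentially. bseq p s A (lead K x) < \<alpha>"
      using bseq_lead_LIMSEQ[OF x] by (simp add: order_tendstoD(2))
    then have "\<forall>\<^sub>F K in sequentially. 1 / (real (lead K x) / r ^ K) = step \<alpha> K x"
      by eventually_elim (use x in \<open>simp add: step_def weight_def\<close>)
    moreover have "(\<lambda>K. 1 / (real (lead K x) / r ^ K)) \<longlonglongrightarrow> 1 / x"
      using fund_pos[OF x] LIMSEQ_nat_floor_pow_mult_div_pow[OF one_less_r, of x]
      by (intro tendsto_divide tendsto_const) (auto simp: lead_def)
    ultimately show ?thesis
      using x True by (simp add: Lim_transform_eventually)
  next
    case False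
    then have "\<alpha> < lam p s A x"
      using assms x by auto
    then have "\<forall>\<^sub>F K in sequentially. \<alpha> < bseq p s A (lead K x)"
      using bseq_lead_LIMSEQ[OF x] by (simp add: order_tendstoD(1))
    then have "\<forall>\<^sub>F K in sequentially. 0 = step \<alpha> K x"
      by eventually_elim (simp add: step_def weight_def)
    then have "(\<lambda>K. step \<alpha> K x) \<longlonglongrightarrow> 0"
      by (rule Lim_transform_eventually[OF tendsto_const])
    then show ?thesis
      using \<open>\<alpha> < lam p s A x\<close> by simp
  qed
next
  case False
  then have "step \<alpha> K x = 0" "indicator {x \<in> fund. lam p s A x \<le> \<alpha>} x = (0::real)" for K
    by (auto simp: step_def indicator_def)
  then show ?thesis
    by simp
qed

lemma block_sum_LIMSEQ:
  "(\<lambda>K. \<Sum>n\<in>{s ^ (K - 1)..<s ^ K}. weight \<alpha> n)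
     \<longlonglongrightarrow> integral\<^sup>L lebesgue (\<lambda>x. indicator {x \<in> fund. lam p s A x \<le> \<alpha>} x * (1 / x))"
proof -
  let ?f = "\<lambda>x. indicator {x \<in> fund. lam p s A x \<le> \<alpha>} x * (1 / x)"
  have "{x \<in> fund. lam p s A x \<le> \<alpha>} \<in> sets lebesgue"
    using sets_level_sets_lam(1)[of \<alpha>] by simp
  then have "?f \<in> borel_measurable lebesgue"
    by (intro borel_measurable_times borel_measurable_indicator measurable_completion) auto
  then have "(\<lambda>K. integral\<^sup>L lebesgue (step \<alpha> K)) \<longlonglongrightarrow> integral\<^sup>L lebesgue ?f"
  proof (rule integral_dominated_convergence[OF _ step_measurable])
    show "integrable lebesgue (\<lambda>x. indicator fund x * r)"
      by (intro integrable_mult_left integrable_real_indicator) auto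
    show "AE x in lebesgue. norm (step \<alpha> K x) \<le> indicator fund x * r" for K
      using step_bound by simp
    show "AE x in lebesgue. (\<lambda>K. step \<alpha> K x) \<longlonglongrightarrow> ?f x"
      using step_LIMSEQ by (intro AE_I'[OF null_sets_level_set_lam]) blast
  qed
  moreover have "\<forall>\<^sub>F K in sequentially. integral\<^sup>L lebesgue (step \<alpha> K) = (\<Sum>n\<in>{s ^ (K - 1)..<s ^ K}. weight \<alpha> n)"
    using eventually_ge_at_top[of 1] by eventually_elim (rule has_bochner_integral_integral_eq[OF has_bochner_integral_step])
  ultimately show ?thesis
    by (rule Lim_transform_eventually)
qed

lemma weight_nonneg: "0 \<le> weight \<alpha> n"
  unfolding weight_def by simp

lemma partial_sums_Cesaro:
  "(\<lambda>K. (\<Sum>n\<in>{1..<s ^ K}. weight \<alpha> n) / real K)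
     \<longlonglongrightarrow> integral\<^sup>L lebesgue (\<lambda>x. indicator {x \<in> fund. lam p s A x \<le> \<alpha>} x * (1 / x))"
proof (rule LIMSEQ_Cesaro_diff)
  have "(\<Sum>n\<in>{1..<s ^ Suc K}. weight \<alpha> n) - (\<Sum>n\<in>{1..<s ^ K}. weight \<alpha> n)
      = (\<Sum>n\<in>{s ^ (Suc K - 1)..<s ^ Suc K}. weight \<alpha> n)" for K
  proof -
    have "1 \<le> s ^ K" "s ^ K \<le> s ^ Suc K"
      using s_ge_2 by simp_all
    then show ?thesis
      using sum.atLeastLessThan_concat[of 1 "s ^ K" "s ^ Suc K" "weight \<alpha>"] by simp
  qed
  then show "(\<lambda>K. (\<Sum>n\<in>{1..<s ^ Suc K}. weight \<alpha> n) - (\<Sum>n\<in>{1..<s ^ K}. weight \<alpha> n))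
      \<longlonglongrightarrow> integral\<^sup>L lebesgue (\<lambda>x. indicator {x \<in> fund. lam p s A x \<le> \<alpha>} x * (1 / x))"
    using LIMSEQ_Suc[OF block_sum_LIMSEQ] by simp
qed

lemma harmonic_sum_bounds:
  assumes "r \<le> x"
  defines "K \<equiv> nat \<lfloor>log r x\<rfloor>"
  shows "(\<Sum>n\<in>{1..<s ^ K}. weight \<alpha> n) \<le> (\<Sum>n\<in>{n. 1 \<le> n \<and> real n \<le> x \<and> bseq p s A n \<le> \<alpha>}. 1 / real n)
    \<and> (\<Sum>n\<in>{n. 1 \<le> n \<and> real n \<le> x \<and> bseq p s A n \<le> \<alpha>}. 1 / real n) \<le> (\<Sum>n\<in>{1..<s ^ Suc K}. weight \<alpha> n)"
proof -
  have "0 < x" "0 \<le> \<lfloor>log r x\<rfloor>"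
    using assms one_less_r ln_bounds_floor_log(1)[OF one_less_r assms(1)] by linarith+
  then have "r powr real K \<le> x \<and> x < r powr real (Suc K)"
    using floor_log_eq_powr_iff[of x r "\<lfloor>log r x\<rfloor>"] one_less_r by (simp add: K_def add.commute)
  then have "r ^ K \<le> x" "x < r ^ Suc K"
    using one_less_r by (simp_all only: powr_realpow)
  then have sub: "{1..<s ^ K} \<subseteq> {n. 1 \<le> n \<and> real n \<le> x}" "{n. 1 \<le> n \<and> real n \<le> x} \<subseteq> {1..<s ^ Suc K}"
    by (auto simp flip: of_nat_power simp del: power_Suc
        dest: order.strict_trans1 intro: less_imp_le order.trans)
  have fin: "finite {n. 1 \<le> n \<and> real n \<le> x}"
    using sub(2) by (rule finite_subset) simp
  have "(\<Sum>n\<in>{n. 1 \<le> n \<and> real n \<le> x \<and> bseq p s A n \<le> \<alpha>}. 1 / real n)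
      = (\<Sum>n\<in>{n. 1 \<le> n \<and> real n \<le> x}. weight \<alpha> n)"
    using sum.inter_filter[OF fin, of "\<lambda>n. 1 / real n" "\<lambda>n. bseq p s A n \<le> \<alpha>"]
    by (simp add: weight_def conj_assoc)
  then show ?thesis
    using sub fin weight_nonneg by (auto intro!: sum_mono2)
qed

end

theorem theorem4:
  fixes p s :: nat and A :: "nat set" and \<alpha> :: real
  assumes "p \<ge> 3" and "2 \<le> s" and "s < p"
    and "A \<subseteq> {0..<p}" and "card A = s"
    and "Inf (bseq p s A ` {1..}) \<le> \<alpha>" and "\<alpha> \<le> Sup (bseq p s A ` {1..})"
  shows "((\<lambda>x. (1 / ln x) * (\<Sum>n\<in>{n. 1 \<le> n \<and> real n \<le> x \<and> bseq p s A n \<le> \<alpha>}. 1 / real n))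
          \<longlongrightarrow> (1 / ln (real s)) *
              (LINT x:{x \<in> {1 / real s..<1}. lam p s A x \<le> \<alpha>}|lebesgue. 1 / x)) at_top"
proof -
  interpret digit_substitution p s A
    using assms(1-5) by unfold_locales
  have "((\<lambda>x. (1 / ln x) * (\<Sum>n\<in>{n. 1 \<le> n \<and> real n \<le> x \<and> bseq p s A n \<le> \<alpha>}. 1 / real n))
      \<longlongrightarrow> (1 / ln r) * integral\<^sup>L lebesgue (\<lambda>x. indicator {x \<in> fund. lam p s A x \<le> \<alpha>} x * (1 / x))) at_top"
    by (intro tendsto_div_ln_if_Cesaro[OF one_less_r partial_sums_Cesaro] harmonic_sum_bounds
        sum_nonneg weight_nonneg)
  then show ?thesis
    by (simp add: set_lebesgue_integral_def)
qed

end
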